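(* Let $n_2,n_3\ge 2$, $n=1+n_2+n_3$, and consider the Stiefel manifold $V_{1+n_2}\mathbb R^n=\mathrm{SO}(n)/\mathrm{SO}(n_3)$, with $\mathrm{SO}(n_3)$ acting on the last $n_3$ coordinates. Let $I_1=\{1\}$, $I_2=\{2,\dots,1+n_2\}$, $I_3=\{2+n_2,\dots,n\}$, and decompose $\mathfrak m=\mathfrak{so}(n_2)\oplus\mathfrak m_{12}\oplus\mathfrak m_{13}\oplus\mathfrak m_{23}$, where $\mathfrak{so}(n_2)=\mathrm{span}\{\xi_{ab}:a<b,\ a,b\in I_2\}$ and $\mathfrak m_{ij}=\mathrm{span}\{\xi_{ab}:a\in I_i,b\in I_j\}$. Consider the family of metrics $\Lambda=\lambda_2\mathrm{Id}_{\mathfrak{so}(n_2)}+\lambda_{12}\mathrm{Id}_{\mathfrak m_{12}}+\lambda_{13}\mathrm{Id}_{\mathfrak m_{13}}+\lambda_{23}\mathrm{Id}_{\mathfrak m_{23}}$ with all $\lambda$'s positive. For $X=X_{\mathfrak{so}(n_2)}+X_{\mathfrak m_{12}}+X_{\mathfrak m_{13}}+X_{\mathfrak m_{23}}\in\mathfrak m$ (components in the respective summands), $X$ is an equigeodesic vector for this family if and only if $$[X_{\mathfrak{so}(n_2)},X_{\mathfrak m_{12}}]=0,\ [X_{\mathfrak{so}(n_2)},X_{\mathfrak m_{23}}]=0,\ [X_{\mathfrak m_{12}},X_{\mathfrak m_{13}}]_{\mathfrak m}=0,\ [X_{\mathfrak m_{12}},X_{\mathfrak m_{23}}]_{\mathfrak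 m}=0,\ [X_{\mathfrak m_{13}},X_{\mathfrak m_{23}}]_{\mathfrak m}=0.$$
   Context: $E_{ab}$ is the $n\times n$ matrix with $1$ in entry $(a,b)$ and $0$ elsewhere; $\xi_{ab}=E_{ab}-E_{ba}$. $\mathfrak m$ is the orthogonal complement of $\mathfrak{so}(n_3)$ in $\mathfrak{so}(n)$ with respect to the negative of the Killing form; $[\cdot,\cdot]_{\mathfrak m}$ is the $\mathfrak m$-component of the bracket. A nonzero $X\in\mathfrak m$ is an equigeodesic vector (for a given family of $B$-symmetric positive operators $\Lambda$ on $\mathfrak m$) if $[X,\Lambda X]_{\mathfrak m}=0$ for every $\Lambda$ in the family. *)

theory Defs
  imports Complex_Main
begin

text \<open>n x n real matrices are modelled as functions nat => nat => real, indices 1..n,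
  entries outside {1..n} x {1..n} equal to zero.\<close>

type_synonym mat = "nat \<Rightarrow> nat \<Rightarrow> real"

definition supp_in :: "nat set \<Rightarrow> mat \<Rightarrow> bool" where
  "supp_in S A \<longleftrightarrow> (\<forall>i j. (i \<notin> S \<or> j \<notin> S) \<longrightarrow> A i j = 0)"

definition skew :: "mat \<Rightarrow> bool" where
  "skew A \<longleftrightarrow> (\<forall>i j. A i j = - A j i)"

definition so :: "nat \<Rightarrow> mat set" where
  "so n = {A. supp_in {1..n} A \<and> skew A}"

definition E :: "nat \<Rightarrow> nat \<Rightarrow> mat" where
  "E a b = (\<lambda>i j. if i = a \<and> j = b then 1 else 0)"

definition xi :: "nat \<Rightarrow> nat \<Rightarrow> mat" where
  "xi a b = (\<lambda>i j. E a b i j - E b a i j)"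

definition madd :: "mat \<Rightarrow> mat \<Rightarrow> mat" where
  "madd A B = (\<lambda>i j. A i j + B i j)"

definition msub :: "mat \<Rightarrow> mat \<Rightarrow> mat" where
  "msub A B = (\<lambda>i j. A i j - B i j)"

definition mscale :: "real \<Rightarrow> mat \<Rightarrow> mat" where
  "mscale c A = (\<lambda>i j. c * A i j)"

definition mmul :: "nat \<Rightarrow> mat \<Rightarrow> mat \<Rightarrow> mat" where
  "mmul n A B = (\<lambda>i j. \<Sum>k\<in>{1..n}. A i k * B k j)"

definition brk :: "nat \<Rightarrow> mat \<Rightarrow> mat \<Rightarrow> mat" where
  "brk n A B = msub (mmul n A B) (mmul n B A)"

text \<open>Killing form of so(n): trace of ad X o ad Y, computed in the basis
  xi a b (a < b) of so(n); the coefficient of xi a b in a skew matrix Z is Z a b.\<close>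
definition killing :: "nat \<Rightarrow> mat \<Rightarrow> mat \<Rightarrow> real" where
  "killing n X Y = (\<Sum>a\<in>{1..n}. \<Sum>b\<in>{a<..n}. brk n X (brk n Y (xi a b)) a b)"

definition I1 :: "nat set" where "I1 = {1}"
definition I2 :: "nat \<Rightarrow> nat set" where "I2 n2 = {2..1+n2}"
definition I3 :: "nat \<Rightarrow> nat \<Rightarrow> nat set" where "I3 n2 n3 = {2+n2..1+n2+n3}"

definition k_sub :: "nat \<Rightarrow> nat \<Rightarrow> mat set" where
  "k_sub n2 n3 = {A \<in> so (1+n2+n3). supp_in (I3 n2 n3) A}"

definition m_sp :: "nat \<Rightarrow> nat \<Rightarrow> mat set" where
  "m_sp n2 n3 = {X \<in> so (1+n2+n3). \<forall>Y\<in>k_sub n2 n3. - killing (1+n2+n3) X Y = 0}"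

definition mproj :: "nat \<Rightarrow> nat \<Rightarrow> mat \<Rightarrow> mat" where
  "mproj n2 n3 Z = (THE W. W \<in> m_sp n2 n3 \<and> msub Z W \<in> k_sub n2 n3)"

definition mbr :: "nat \<Rightarrow> nat \<Rightarrow> mat \<Rightarrow> mat \<Rightarrow> mat" where
  "mbr n2 n3 A B = mproj n2 n3 (brk (1+n2+n3) A B)"

text \<open>Span of {xi a b : a in S, b in T} (for S, T disjoint or S = T with a < b):
  skew matrices whose nonzero entries lie in (S x T) union (T x S).\<close>
definition blk :: "nat set \<Rightarrow> nat set \<Rightarrow> mat \<Rightarrow> mat" where
  "blk S T A = (\<lambda>i j. if (i \<in> S \<and> j \<in> T) \<or> (i \<in> T \<and> j \<in> S) then A i j else 0)"

definition span_blk :: "nat \<Rightarrow> nat set \<Rightarrow> nat set \<Rightarrow> mat set" where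
  "span_blk n S T = {A \<in> so n. blk S T A = A}"

definition so_n2 :: "nat \<Rightarrow> nat \<Rightarrow> mat set" where
  "so_n2 n2 n3 = span_blk (1+n2+n3) (I2 n2) (I2 n2)"
definition m12 :: "nat \<Rightarrow> nat \<Rightarrow> mat set" where
  "m12 n2 n3 = span_blk (1+n2+n3) I1 (I2 n2)"
definition m13 :: "nat \<Rightarrow> nat \<Rightarrow> mat set" where
  "m13 n2 n3 = span_blk (1+n2+n3) I1 (I3 n2 n3)"
definition m23 :: "nat \<Rightarrow> nat \<Rightarrow> mat set" where
  "m23 n2 n3 = span_blk (1+n2+n3) (I2 n2) (I3 n2 n3)"

definition Lam :: "nat \<Rightarrow> nat \<Rightarrow> real \<Rightarrow> real \<Rightarrow> real \<Rightarrow> real \<Rightarrow> mat \<Rightarrow> mat" where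
  "Lam n2 n3 l2 l12 l13 l23 X =
     madd (madd (mscale l2 (blk (I2 n2) (I2 n2) X)) (mscale l12 (blk I1 (I2 n2) X)))
          (madd (mscale l13 (blk I1 (I3 n2 n3) X)) (mscale l23 (blk (I2 n2) (I3 n2 n3) X)))"

definition metric_family :: "nat \<Rightarrow> nat \<Rightarrow> (mat \<Rightarrow> mat) set" where
  "metric_family n2 n3 = {Lam n2 n3 l2 l12 l13 l23 | l2 l12 l13 l23.
       l2 > 0 \<and> l12 > 0 \<and> l13 > 0 \<and> l23 > 0}"

definition zero_mat :: mat where "zero_mat = (\<lambda>i j. 0)"

definition equigeodesic :: "nat \<Rightarrow> nat \<Rightarrow> (mat \<Rightarrow> mat) set \<Rightarrow> mat \<Rightarrow> bool" where
  "equigeodesic n2 n3 F X \<longleftrightarrow> X \<in> m_sp n2 n3 \<and> X \<noteq> zero_mat \<and>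
     (\<forall>L\<in>F. mbr n2 n3 X (L X) = zero_mat)"

end

theory Submission
  imports Defs
begin

text \<open>Write \<open>\<mathfrak>m\<^sub>S\<^sub>T\<close> for the span of the \<open>\<xi>\<^sub>a\<^sub>b\<close> with \<open>a \<in> S, b \<in> T\<close>. Brackets obey
  \<open>[\<mathfrak>m\<^sub>S\<^sub>T, \<mathfrak>m\<^sub>T\<^sub>U] \<subseteq> \<mathfrak>m\<^sub>S\<^sub>U\<close>, so a bracket of two different components of \<open>X\<close> never has an
  \<open>I\<^sub>3 \<times> I\<^sub>3\<close> block; since the Killing form of \<open>\<mathfrak>so(n)\<close> is \<open>(n - 2) tr(XY)\<close>, this means it lies in
  \<open>\<mathfrak>m\<close>, and the projection in \<open>[X, \<Lambda>X]\<^sub>m\<close> is vacuous. Hence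
  \<open>[X, \<Lambda>X] = \<Sum>\<^sub>k \<lambda>\<^sub>k [X, X\<^sub>k]\<close>, and as the four \<open>\<lambda>\<^sub>k > 0\<close> vary independently, \<open>X\<close> is
  equigeodesic iff every \<open>[X, X\<^sub>k]\<close> vanishes. Expanding, \<open>[X, X\<^sub>1\<^sub>3] = [X\<^sub>1\<^sub>2, X\<^sub>1\<^sub>3] - [X\<^sub>1\<^sub>3, X\<^sub>2\<^sub>3]\<close>
  is a difference of elements of the disjoint blocks \<open>\<mathfrak>m\<^sub>2\<^sub>3\<close> and \<open>\<mathfrak>m\<^sub>1\<^sub>2\<close>, so both vanish, and the
  remaining brackets are separated in the same way.\<close>

lemma mmul_madd_left: "mmul n (madd A B) C i j = mmul n A C i j + mmul n B C i j"
  by (simp add: mmul_def madd_def distrib_right sum.distrib)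

lemma mmul_madd_right: "mmul n A (madd B C) i j = mmul n A B i j + mmul n A C i j"
  by (simp add: mmul_def madd_def distrib_left sum.distrib)

lemma mmul_mscale_left: "mmul n (mscale c A) B i j = c * mmul n A B i j"
  by (simp add: mmul_def mscale_def sum_distrib_left mult_ac)

lemma mmul_mscale_right: "mmul n A (mscale c B) i j = c * mmul n A B i j"
  by (simp add: mmul_def mscale_def sum_distrib_left mult_ac)

lemma madd_zero_mat: "madd zero_mat A = A" "madd A zero_mat = A"
  by (simp_all add: madd_def zero_mat_def)

lemma mmul_nonzero_entry: "mmul n A B i j \<noteq> 0 \<Longrightarrow> \<exists>k. A i k \<noteq> 0 \<and> B k j \<noteq> 0"
  unfolding mmul_def by (auto dest: sum.not_neutral_contains_not_neutral)

lemma brk_apply: "brk n A B i j = mmul n A B i j - mmul n B A i j"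
  by (simp add: brk_def msub_def)

lemma brk_madd_left: "brk n (madd A B) C i j = brk n A C i j + brk n B C i j"
  by (simp add: brk_apply mmul_madd_left mmul_madd_right)

lemma brk_madd_right: "brk n A (madd B C) i j = brk n A B i j + brk n A C i j"
  by (simp add: brk_apply mmul_madd_left mmul_madd_right)

lemma brk_mscale_right: "brk n A (mscale c B) i j = c * brk n A B i j"
  by (simp add: brk_apply mmul_mscale_left mmul_mscale_right algebra_simps)

lemma brk_self: "brk n A A i j = 0"
  by (simp add: brk_apply)

lemma brk_anticomm: "brk n B A i j = - brk n A B i j"
  by (simp add: brk_apply)

lemma brk_nonzero_entry:
  "brk n A B i j \<noteq> 0 \<Longrightarrow> \<exists>k. (A i k \<noteq> 0 \<and> B k j \<noteq> 0) \<or> (B i k \<noteq> 0 \<and> A k j \<noteq> 0)"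
  unfolding brk_apply by (metis diff_self mmul_nonzero_entry)

lemma so_skew: "A \<in> so n \<Longrightarrow> A i j = - A j i"
  unfolding so_def skew_def by blast

lemma so_diag: "A \<in> so n \<Longrightarrow> A i i = 0"
  using so_skew[of A n i i] by simp

lemma so_outside: "A \<in> so n \<Longrightarrow> i \<notin> {1..n} \<or> j \<notin> {1..n} \<Longrightarrow> A i j = 0"
  by (simp add: so_def supp_in_def)

lemma soI:
  "(\<And>i j. A i j = - A j i) \<Longrightarrow> (\<And>i j. i \<notin> {1..n} \<or> j \<notin> {1..n} \<Longrightarrow> A i j = 0) \<Longrightarrow> A \<in> so n"
  unfolding so_def supp_in_def skew_def by blast

lemma mmul_so_transpose: "A \<in> so n \<Longrightarrow> B \<in> so n \<Longrightarrow> mmul n A B i j = mmul n B A j i"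
  unfolding mmul_def
proof (rule sum.cong)
  fix k assume "A \<in> so n" "B \<in> so n"
  then show "A i k * B k j = B j k * A k i"
    using so_skew[of A n i k] so_skew[of B n k j] by simp
qed simp

lemma brk_so: assumes "A \<in> so n" "B \<in> so n" shows "brk n A B \<in> so n"
proof (rule soI)
  fix i j
  show "brk n A B i j = - brk n A B j i"
    using mmul_so_transpose[OF assms] mmul_so_transpose[OF assms(2,1)] by (simp add: brk_apply)
  show "brk n A B i j = 0" if "i \<notin> {1..n} \<or> j \<notin> {1..n}"
    using that so_outside[OF assms(1)] so_outside[OF assms(2)] by (auto simp: brk_apply mmul_def)
qed

lemma madd_so: assumes "A \<in> so n" "B \<in> so n" shows "madd A B \<in> so n"
proof (rule soI)
  fix i j
  show "madd A B i j = - madd A B j i"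
    using so_skew[OF assms(1), of i j] so_skew[OF assms(2), of i j] by (simp add: madd_def)
  show "madd A B i j = 0" if "i \<notin> {1..n} \<or> j \<notin> {1..n}"
    using that so_outside[OF assms(1)] so_outside[OF assms(2)] by (simp add: madd_def)
qed

lemma mscale_so: assumes "A \<in> so n" shows "mscale c A \<in> so n"
proof (rule soI)
  fix i j
  show "mscale c A i j = - mscale c A j i" using so_skew[OF assms, of i j] by (simp add: mscale_def)
  show "mscale c A i j = 0" if "i \<notin> {1..n} \<or> j \<notin> {1..n}"
    using that so_outside[OF assms] by (simp add: mscale_def)
qed

lemma sum_upper_triangle_symmetric:
  fixes f :: "'a::linorder \<Rightarrow> 'a \<Rightarrow> 'b::comm_ring_1"
  assumes "finite A" and symmetric: "\<And>a b. f a b = f b a"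
  shows "2 * (\<Sum>a\<in>A. \<Sum>b\<in>{b\<in>A. a < b}. f a b) = (\<Sum>a\<in>A. \<Sum>b\<in>A. f a b) - (\<Sum>a\<in>A. f a a)"
proof -
  have split: "(\<Sum>b\<in>A. f a b) = (\<Sum>b\<in>{b\<in>A. b < a}. f a b) + f a a + (\<Sum>b\<in>{b\<in>A. a < b}. f a b)"
    if "a \<in> A" for a
  proof -
    have "A = {b\<in>A. b < a} \<union> {a} \<union> {b\<in>A. a < b}" using that by auto
    then have "(\<Sum>b\<in>A. f a b) = (\<Sum>b\<in>{b\<in>A. b < a} \<union> {a} \<union> {b\<in>A. a < b}. f a b)" by simp
    also have "\<dots> = (\<Sum>b\<in>{b\<in>A. b < a}. f a b) + f a a + (\<Sum>b\<in>{b\<in>A. a < b}. f a b)"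
      using assms(1) by (simp add: sum.union_disjoint) (rule sum.union_disjoint; auto)
    finally show ?thesis .
  qed
  have lower: "(\<Sum>a\<in>A. \<Sum>b\<in>{b\<in>A. b < a}. f a b) = (\<Sum>a\<in>A. \<Sum>b\<in>{b\<in>A. a < b}. f a b)"
    using sum.swap_restrict[OF assms(1) assms(1), of f "\<lambda>a b. b < a"] by (simp add: symmetric)
  have "(\<Sum>a\<in>A. \<Sum>b\<in>A. f a b) = (\<Sum>a\<in>A. (\<Sum>b\<in>{b\<in>A. b < a}. f a b) + f a a + (\<Sum>b\<in>{b\<in>A. a < b}. f a b))"
    by (intro sum.cong refl split)
  also have "\<dots> = (\<Sum>a\<in>A. \<Sum>b\<in>{b\<in>A. a < b}. f a b) + (\<Sum>a\<in>A. f a a) + (\<Sum>a\<in>A. \<Sum>b\<in>{b\<in>A. a < b}. f a b)"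
    by (simp only: sum.distrib lower)
  finally show ?thesis by (simp add: algebra_simps)
qed

lemma mmul_xi_right:
  "a \<noteq> b \<Longrightarrow> a \<in> {1..n} \<Longrightarrow> b \<in> {1..n} \<Longrightarrow>
   mmul n Y (xi a b) i j = (if j = b then Y i a else 0) - (if j = a then Y i b else 0)"
  unfolding mmul_def xi_def E_def
  by (simp add: right_diff_distrib sum_subtractf if_distrib[of "\<lambda>x. Y i _ * x"] cong: if_cong)

lemma mmul_xi_left:
  "a \<noteq> b \<Longrightarrow> a \<in> {1..n} \<Longrightarrow> b \<in> {1..n} \<Longrightarrow>
   mmul n (xi a b) Y i j = (if i = a then Y b j else 0) - (if i = b then Y a j else 0)"
  unfolding mmul_def xi_def E_def
  by (simp add: left_diff_distrib sum_subtractf if_distrib[of "\<lambda>x. x * Y _ j"] cong: if_cong)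

lemma killing_summand:
  assumes "Y \<in> so n" "a \<noteq> b" "a \<in> {1..n}" "b \<in> {1..n}"
  shows "brk n X (brk n Y (xi a b)) a b = mmul n X Y a a + mmul n Y X b b + 2 * X a b * Y a b"
proof -
  have inner: "brk n Y (xi a b) i j = (if j = b then Y i a else 0) - (if j = a then Y i b else 0)
      - ((if i = a then Y b j else 0) - (if i = b then Y a j else 0))" for i j
    by (simp only: brk_apply mmul_xi_right[OF assms(2-4)] mmul_xi_left[OF assms(2-4)])
  have "mmul n X (brk n Y (xi a b)) a b = mmul n X Y a a + X a b * Y a b"
    unfolding mmul_def inner using assms so_diag[OF assms(1)]
    by (simp add: right_diff_distrib distrib_left sum_subtractf sum.distrib
        if_distrib[of "\<lambda>x. X a _ * x"] cong: if_cong)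
  moreover have "mmul n (brk n Y (xi a b)) X a b = - mmul n Y X b b - Y a b * X a b"
    unfolding mmul_def inner using assms so_diag[OF assms(1)]
    by (simp add: left_diff_distrib distrib_right sum_subtractf sum.distrib
        if_distrib[of "\<lambda>x. x * X _ b"] sum_negf cong: if_cong)
  ultimately show ?thesis by (simp add: brk_apply)
qed

definition mtrace :: "nat \<Rightarrow> mat \<Rightarrow> real" where
  "mtrace n A = (\<Sum>i\<in>{1..n}. A i i)"

lemma killing_so:
  assumes X: "X \<in> so n" and Y: "Y \<in> so n"
  shows "killing n X Y = (real n - 2) * mtrace n (mmul n X Y)"
proof -
  let ?t = "mtrace n (mmul n X Y)"
  define f where "f a b = mmul n X Y a a + mmul n X Y b b + 2 * X a b * Y a b" for a b
  have f_sym: "f a b = f b a" for a b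
    using so_skew[OF X, of a b] so_skew[OF Y, of a b] by (simp add: f_def)
  have "killing n X Y = (\<Sum>a\<in>{1..n}. \<Sum>b\<in>{b\<in>{1..n}. a < b}. f a b)"
    unfolding killing_def
  proof (rule sum.cong[OF refl])
    fix a assume a: "a \<in> {1..n}"
    then have "{a<..n} = {b\<in>{1..n}. a < b}" by auto
    then show "(\<Sum>b\<in>{a<..n}. brk n X (brk n Y (xi a b)) a b) = (\<Sum>b\<in>{b\<in>{1..n}. a < b}. f a b)"
      using a by (auto intro!: sum.cong simp: f_def killing_summand[OF Y] mmul_so_transpose[OF Y X])
  qed
  moreover have "(\<Sum>a\<in>{1..n}. \<Sum>b\<in>{1..n}. X a b * Y a b) = - ?t"
    unfolding mtrace_def mmul_def sum_negf[symmetric]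
    by (intro sum.cong refl) (metis mult_minus_right so_skew[OF Y])
  then have "(\<Sum>a\<in>{1..n}. \<Sum>b\<in>{1..n}. f a b) = 2 * real n * ?t - 2 * ?t"
    by (simp add: f_def sum.distrib mtrace_def sum_distrib_left[symmetric] mult.assoc)
  moreover have "(\<Sum>a\<in>{1..n}. f a a) = 2 * ?t"
    by (simp add: f_def so_diag[OF X] mtrace_def sum_distrib_left)
  ultimately have "2 * killing n X Y = 2 * real n * ?t - 2 * ?t - 2 * ?t"
    using sum_upper_triangle_symmetric[of "{1..n}" f, OF _ f_sym] by simp
  then show ?thesis by (simp add: algebra_simps)
qed

lemma killing_orthogonal_block_iff:
  assumes n: "2 < n" and X: "X \<in> so n"
  shows "(\<forall>Y\<in>so n. supp_in S Y \<longrightarrow> killing n X Y = 0) \<longleftrightarrow> (\<forall>i\<in>S. \<forall>j\<in>S. X i j = 0)"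
proof
  assume X0: "\<forall>i\<in>S. \<forall>j\<in>S. X i j = 0"
  show "\<forall>Y\<in>so n. supp_in S Y \<longrightarrow> killing n X Y = 0"
  proof (intro ballI impI)
    fix Y assume Y: "Y \<in> so n" "supp_in S Y"
    have terms: "X i k * Y k i = 0" for i k
      using X0 Y(2) by (cases "i \<in> S \<and> k \<in> S") (auto simp: supp_in_def)
    show "killing n X Y = 0"
      by (simp only: killing_so[OF X Y(1)] mtrace_def mmul_def terms sum.neutral_const
          mult_zero_right)
  qed
next
  assume orth: "\<forall>Y\<in>so n. supp_in S Y \<longrightarrow> killing n X Y = 0"
  \<comment> \<open>Test against the \<open>S \<times> S\<close> block \<open>Y\<close> of \<open>X\<close> itself: \<open>tr(XY) = - \<Sum> Y\<^sub>i\<^sub>k\<^sup>2\<close>.\<close>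
  define Y where "Y i j = (if i \<in> S \<and> j \<in> S then X i j else 0)" for i j
  have Y_so: "Y \<in> so n"
  proof (rule soI)
    fix i j
    show "Y i j = - Y j i" using so_skew[OF X, of i j] by (simp add: Y_def)
    show "Y i j = 0" if "i \<notin> {1..n} \<or> j \<notin> {1..n}"
      using that so_outside[OF X] by (simp add: Y_def)
  qed
  have "supp_in S Y" by (simp add: supp_in_def Y_def)
  with orth Y_so have "killing n X Y = 0" by blast
  then have "mtrace n (mmul n X Y) = 0"
    using n by (simp add: killing_so[OF X Y_so])
  moreover have "X i k * Y k i = - (Y i k)\<^sup>2" for i k
    using so_skew[OF X, of i k] by (simp add: Y_def power2_eq_square)
  ultimately have "(\<Sum>i\<in>{1..n}. \<Sum>k\<in>{1..n}. (Y i k)\<^sup>2) = 0"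
    by (simp add: mtrace_def mmul_def sum_negf)
  then have "\<forall>i\<in>{1..n}. \<forall>k\<in>{1..n}. (Y i k)\<^sup>2 = 0"
    by (simp add: sum_nonneg_eq_0_iff sum_nonneg)
  then show "\<forall>i\<in>S. \<forall>j\<in>S. X i j = 0"
    using so_outside[OF X] by (metis Y_def power_eq_0_iff zero_neq_numeral)
qed

lemma m_sp_iff:
  assumes "2 < 1 + n2 + n3"
  shows "X \<in> m_sp n2 n3 \<longleftrightarrow> X \<in> so (1+n2+n3) \<and> (\<forall>i\<in>I3 n2 n3. \<forall>j\<in>I3 n2 n3. X i j = 0)"
  using killing_orthogonal_block_iff[OF assms, of X "I3 n2 n3"]
  by (auto simp: m_sp_def k_sub_def)

lemma mproj_eq_self:
  assumes N: "2 < 1 + n2 + n3" and Z: "Z \<in> m_sp n2 n3"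
  shows "mproj n2 n3 Z = Z"
  unfolding mproj_def
proof (rule the_equality)
  have "msub Z Z \<in> so (1+n2+n3)"
    by (rule soI) (simp_all add: msub_def)
  then show "Z \<in> m_sp n2 n3 \<and> msub Z Z \<in> k_sub n2 n3"
    using Z by (simp add: k_sub_def supp_in_def msub_def)
next
  fix W assume W: "W \<in> m_sp n2 n3 \<and> msub Z W \<in> k_sub n2 n3"
  show "W = Z"
  proof (intro ext)
    fix i j
    show "W i j = Z i j"
    proof (cases "i \<in> I3 n2 n3 \<and> j \<in> I3 n2 n3")
      case True
      then show ?thesis using W Z by (simp add: m_sp_iff[OF N])
    next
      case False
      then show ?thesis using W by (auto simp: k_sub_def supp_in_def msub_def)
    qed
  qed
qed

lemma mbr_eq_brk:
  "2 < 1 + n2 + n3 \<Longrightarrow> brk (1+n2+n3) A B \<in> m_sp n2 n3 \<Longrightarrow> mbr n2 n3 A B = brk (1+n2+n3) A B"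
  by (simp add: mbr_def mproj_eq_self)

lemma m_sp_madd:
  assumes "2 < 1 + n2 + n3" "A \<in> m_sp n2 n3" "B \<in> m_sp n2 n3"
  shows "madd A B \<in> m_sp n2 n3"
  using assms(2,3) by (simp add: m_sp_iff[OF assms(1)] madd_so) (simp add: madd_def)

lemma span_blk_so: "A \<in> span_blk n S T \<Longrightarrow> A \<in> so n"
  by (simp add: span_blk_def)

lemma span_blk_commute: "span_blk n S T = span_blk n T S"
  by (auto simp: span_blk_def blk_def fun_eq_iff)

lemma span_blk_nonzero:
  assumes "A \<in> span_blk n S T" "A i j \<noteq> 0"
  shows "(i \<in> S \<and> j \<in> T) \<or> (i \<in> T \<and> j \<in> S)"
proof -
  have "blk S T A i j = A i j" using assms(1) by (simp add: span_blk_def)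
  then show ?thesis using assms(2) by (auto simp: blk_def split: if_splits)
qed

lemma span_blkI:
  assumes "A \<in> so n" "\<And>i j. A i j \<noteq> 0 \<Longrightarrow> (i \<in> S \<and> j \<in> T) \<or> (i \<in> T \<and> j \<in> S)"
  shows "A \<in> span_blk n S T"
  using assms by (auto simp: span_blk_def blk_def fun_eq_iff)

lemma blk_madd: "blk S T (madd A B) = madd (blk S T A) (blk S T B)"
  by (simp add: blk_def madd_def fun_eq_iff)

lemma blk_span_blk: "A \<in> span_blk n S T \<Longrightarrow> blk S T A = A"
  by (simp add: span_blk_def)

lemma span_blk_disjoint_entry:
  assumes "A \<in> span_blk n S T" "B \<in> span_blk n U V" "(S \<times> T \<union> T \<times> S) \<inter> (U \<times> V \<union> V \<times> U) = {}"
  shows "A i j = 0 \<or> B i j = 0"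
  using span_blk_nonzero[OF assms(1)] span_blk_nonzero[OF assms(2)] assms(3) by blast

lemma blk_span_blk_disjoint:
  assumes "A \<in> span_blk n U V" "(S \<times> T \<union> T \<times> S) \<inter> (U \<times> V \<union> V \<times> U) = {}"
  shows "blk S T A = zero_mat"
  using span_blk_nonzero[OF assms(1)] assms(2) by (fastforce simp: blk_def zero_mat_def)

text \<open>The alternative \<open>S = T\<close> covers the subalgebra \<open>span_blk n T T\<close> acting on \<open>span_blk n T U\<close>.\<close>

lemma brk_span_blk:
  assumes "A \<in> span_blk n S T" "B \<in> span_blk n T U"
    and "S \<inter> U = {}" "T \<inter> U = {}" "S = T \<or> S \<inter> T = {}"
  shows "brk n A B \<in> span_blk n S U"
proof (rule span_blkI)
  show "brk n A B \<in> so n" using assms(1,2) by (simp add: brk_so span_blk_so)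
  fix i j assume "brk n A B i j \<noteq> 0"
  then obtain k where "(A i k \<noteq> 0 \<and> B k j \<noteq> 0) \<or> (B i k \<noteq> 0 \<and> A k j \<noteq> 0)"
    using brk_nonzero_entry by blast
  then show "(i \<in> S \<and> j \<in> U) \<or> (i \<in> U \<and> j \<in> S)"
    using span_blk_nonzero[OF assms(1)] span_blk_nonzero[OF assms(2)] assms(3-5) by blast
qed

lemma brk_span_blk_orthogonal:
  assumes "A \<in> span_blk n S T" "B \<in> span_blk n U V" "(S \<union> T) \<inter> (U \<union> V) = {}"
  shows "brk n A B = zero_mat"
proof -
  have "brk n A B i j = 0" for i j
  proof (rule ccontr)
    assume "brk n A B i j \<noteq> 0"
    then obtain k where "(A i k \<noteq> 0 \<and> B k j \<noteq> 0) \<or> (B i k \<noteq> 0 \<and> A k j \<noteq> 0)"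
      using brk_nonzero_entry by blast
    then show False
      using span_blk_nonzero[OF assms(1)] span_blk_nonzero[OF assms(2)] assms(3) by blast
  qed
  then show ?thesis by (simp add: zero_mat_def fun_eq_iff)
qed

lemma span_blk_subset_m_sp:
  assumes "2 < 1 + n2 + n3" "S \<inter> I3 n2 n3 = {} \<or> T \<inter> I3 n2 n3 = {}"
  shows "span_blk (1+n2+n3) S T \<subseteq> m_sp n2 n3"
proof
  fix A assume A: "A \<in> span_blk (1+n2+n3) S T"
  have "A i j = 0" if "i \<in> I3 n2 n3" "j \<in> I3 n2 n3" for i j
    using span_blk_nonzero[OF A, of i j] assms(2) that by blast
  with A show "A \<in> m_sp n2 n3" by (simp add: m_sp_iff[OF assms(1)] span_blk_so)
qed

lemma positive_combination_eq_zero_iff: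
  fixes a b c d :: real
  shows "(\<forall>x y z w. 0 < x \<longrightarrow> 0 < y \<longrightarrow> 0 < z \<longrightarrow> 0 < w \<longrightarrow> x * a + y * b + z * c + w * d = 0)
    \<longleftrightarrow> a = 0 \<and> b = 0 \<and> c = 0 \<and> d = 0"
proof
  assume H: "\<forall>x y z w. 0 < x \<longrightarrow> 0 < y \<longrightarrow> 0 < z \<longrightarrow> 0 < w \<longrightarrow> x * a + y * b + z * c + w * d = 0"
  have "a + b + c + d = 0" "2 * a + b + c + d = 0" "a + 2 * b + c + d = 0"
    "a + b + 2 * c + d = 0" "a + b + c + 2 * d = 0"
    using H[rule_format, of 1 1 1 1] H[rule_format, of 2 1 1 1] H[rule_format, of 1 2 1 1]
      H[rule_format, of 1 1 2 1] H[rule_format, of 1 1 1 2] by simp_all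
  then show "a = 0 \<and> b = 0 \<and> c = 0 \<and> d = 0" by linarith
qed simp

lemma index_blocks_disjoint:
  "I1 \<inter> I2 n2 = {}" "I1 \<inter> I3 n2 n3 = {}" "I2 n2 \<inter> I3 n2 n3 = {}"
  "I2 n2 \<inter> I1 = {}" "I3 n2 n3 \<inter> I1 = {}" "I3 n2 n3 \<inter> I2 n2 = {}"
  by (auto simp: I1_def I2_def I3_def)

lemma summand_spaces_subset_m_sp:
  assumes "2 < 1 + n2 + n3"
  shows "so_n2 n2 n3 \<subseteq> m_sp n2 n3" "m12 n2 n3 \<subseteq> m_sp n2 n3"
    "m13 n2 n3 \<subseteq> m_sp n2 n3" "m23 n2 n3 \<subseteq> m_sp n2 n3"
  using span_blk_subset_m_sp[OF assms] index_blocks_disjoint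
  by (simp_all add: so_n2_def m12_def m13_def m23_def)

context
  fixes n2 n3 :: nat and X2 X12 X13 X23 :: mat
  assumes n3: "2 \<le> n3"
    and X2: "X2 \<in> so_n2 n2 n3" and X12: "X12 \<in> m12 n2 n3"
    and X13: "X13 \<in> m13 n2 n3" and X23: "X23 \<in> m23 n2 n3"
begin

lemma summand_brackets:
  "brk (1+n2+n3) X2 X12 \<in> m12 n2 n3" "brk (1+n2+n3) X2 X23 \<in> m23 n2 n3"
  "brk (1+n2+n3) X12 X13 \<in> m23 n2 n3" "brk (1+n2+n3) X12 X23 \<in> m13 n2 n3"
  "brk (1+n2+n3) X13 X23 \<in> m12 n2 n3" "brk (1+n2+n3) X2 X13 = zero_mat"
proof -
  have X12': "X12 \<in> span_blk (1+n2+n3) (I2 n2) I1"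
    using X12 by (simp add: m12_def span_blk_commute)
  have X23': "X23 \<in> span_blk (1+n2+n3) (I3 n2 n3) (I2 n2)"
    using X23 by (simp add: m23_def span_blk_commute)
  show "brk (1+n2+n3) X2 X12 \<in> m12 n2 n3"
    using brk_span_blk[OF X2[unfolded so_n2_def] X12']
    by (simp add: index_blocks_disjoint m12_def span_blk_commute[of _ "I2 n2" I1])
  show "brk (1+n2+n3) X2 X23 \<in> m23 n2 n3"
    using brk_span_blk[OF X2[unfolded so_n2_def] X23[unfolded m23_def]]
    by (simp add: index_blocks_disjoint m23_def)
  show "brk (1+n2+n3) X12 X13 \<in> m23 n2 n3"
    using brk_span_blk[OF X12' X13[unfolded m13_def]] by (simp add: index_blocks_disjoint m23_def)
  show "brk (1+n2+n3) X12 X23 \<in> m13 n2 n3"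
    using brk_span_blk[OF X12[unfolded m12_def] X23[unfolded m23_def]]
    by (simp add: index_blocks_disjoint m13_def)
  show "brk (1+n2+n3) X13 X23 \<in> m12 n2 n3"
    using brk_span_blk[OF X13[unfolded m13_def] X23'] by (simp add: index_blocks_disjoint m12_def)
  show "brk (1+n2+n3) X2 X13 = zero_mat"
    using brk_span_blk_orthogonal[OF X2[unfolded so_n2_def] X13[unfolded m13_def]]
    by (simp add: index_blocks_disjoint Int_Un_distrib Int_Un_distrib2)
qed

lemma summands_in_m_sp:
  "X2 \<in> m_sp n2 n3" "X12 \<in> m_sp n2 n3" "X13 \<in> m_sp n2 n3" "X23 \<in> m_sp n2 n3"
  using summand_spaces_subset_m_sp[of n2 n3] X2 X12 X13 X23 n3 by auto

lemma summand_brackets_in_m_sp: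
  "brk (1+n2+n3) X2 X12 \<in> m_sp n2 n3" "brk (1+n2+n3) X2 X23 \<in> m_sp n2 n3"
  "brk (1+n2+n3) X12 X13 \<in> m_sp n2 n3" "brk (1+n2+n3) X12 X23 \<in> m_sp n2 n3"
  "brk (1+n2+n3) X13 X23 \<in> m_sp n2 n3"
  using summand_spaces_subset_m_sp[of n2 n3] summand_brackets n3 by auto

lemma Lam_sum_summands:
  "Lam n2 n3 l2 l12 l13 l23 (madd (madd X2 X12) (madd X13 X23)) =
     madd (madd (mscale l2 X2) (mscale l12 X12)) (madd (mscale l13 X13) (mscale l23 X23))"
proof -
  have X2': "X2 \<in> span_blk (1+n2+n3) (I2 n2) (I2 n2)"
    and X12': "X12 \<in> span_blk (1+n2+n3) I1 (I2 n2)"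
    and X13': "X13 \<in> span_blk (1+n2+n3) I1 (I3 n2 n3)"
    and X23': "X23 \<in> span_blk (1+n2+n3) (I2 n2) (I3 n2 n3)"
    using X2 X12 X13 X23 by (simp_all add: so_n2_def m12_def m13_def m23_def)
  note zero = blk_span_blk_disjoint[OF X2'] blk_span_blk_disjoint[OF X12']
    blk_span_blk_disjoint[OF X13'] blk_span_blk_disjoint[OF X23']
  show ?thesis
    unfolding Lam_def blk_madd
    by (simp add: blk_span_blk[OF X2'] blk_span_blk[OF X12'] blk_span_blk[OF X13']
        blk_span_blk[OF X23'] zero madd_zero_mat Int_Un_distrib Int_Un_distrib2 Times_Int_Times index_blocks_disjoint)
qed

lemma brk_with_summands:
  assumes "X = madd (madd X2 X12) (madd X13 X23)"
  shows "brk (1+n2+n3) X X2 i j = - brk (1+n2+n3) X2 X12 i j - brk (1+n2+n3) X2 X23 i j"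
    and "brk (1+n2+n3) X X12 i j =
      brk (1+n2+n3) X2 X12 i j - brk (1+n2+n3) X12 X13 i j - brk (1+n2+n3) X12 X23 i j"
    and "brk (1+n2+n3) X X13 i j = brk (1+n2+n3) X12 X13 i j - brk (1+n2+n3) X13 X23 i j"
    and "brk (1+n2+n3) X X23 i j =
      brk (1+n2+n3) X2 X23 i j + brk (1+n2+n3) X12 X23 i j + brk (1+n2+n3) X13 X23 i j"
  using summand_brackets(6) brk_anticomm[of "1+n2+n3" X12 X2] brk_anticomm[of "1+n2+n3" X13 X2]
    brk_anticomm[of "1+n2+n3" X23 X2] brk_anticomm[of "1+n2+n3" X13 X12]
    brk_anticomm[of "1+n2+n3" X23 X12] brk_anticomm[of "1+n2+n3" X23 X13]
  by (simp_all add: assms brk_madd_left brk_self zero_mat_def)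

lemma equigeodesic_iff_brk_with_summands:
  assumes X: "X = madd (madd X2 X12) (madd X13 X23)" and "X \<noteq> zero_mat"
  shows "equigeodesic n2 n3 (metric_family n2 n3) X \<longleftrightarrow>
    (\<forall>i j. brk (1+n2+n3) X X2 i j = 0 \<and> brk (1+n2+n3) X X12 i j = 0 \<and>
           brk (1+n2+n3) X X13 i j = 0 \<and> brk (1+n2+n3) X X23 i j = 0)"
proof -
  let ?N = "1+n2+n3"
  have N: "2 < ?N" using n3 by simp
  have X_m: "X \<in> m_sp n2 n3"
    using summands_in_m_sp by (simp add: X m_sp_madd[OF N])
  have brk_Lam: "brk ?N X (Lam n2 n3 l2 l12 l13 l23 X) i j =
      l2 * brk ?N X X2 i j + l12 * brk ?N X X12 i j + l13 * brk ?N X X13 i j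
        + l23 * brk ?N X X23 i j"
    for l2 l12 l13 l23 i j
    by (simp add: X Lam_sum_summands brk_madd_right brk_mscale_right)
  have "brk ?N X (Lam n2 n3 l2 l12 l13 l23 X) \<in> m_sp n2 n3" for l2 l12 l13 l23
  proof -
    have "Lam n2 n3 l2 l12 l13 l23 X \<in> so ?N"
      using summands_in_m_sp by (simp add: X Lam_sum_summands madd_so mscale_so m_sp_iff[OF N])
    with X_m have "brk ?N X (Lam n2 n3 l2 l12 l13 l23 X) \<in> so ?N"
      by (simp add: brk_so m_sp_iff[OF N])
    then show ?thesis
      using summand_brackets_in_m_sp brk_Lam brk_with_summands[OF X] by (simp add: m_sp_iff[OF N])
  qed
  then have "mbr n2 n3 X (Lam n2 n3 l2 l12 l13 l23 X) = zero_mat \<longleftrightarrow>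
      (\<forall>i j. l2 * brk ?N X X2 i j + l12 * brk ?N X X12 i j + l13 * brk ?N X X13 i j
        + l23 * brk ?N X X23 i j = 0)" for l2 l12 l13 l23
    using mbr_eq_brk[OF N] brk_Lam by (simp add: fun_eq_iff zero_mat_def)
  then have "(\<forall>L\<in>metric_family n2 n3. mbr n2 n3 X (L X) = zero_mat) \<longleftrightarrow>
      (\<forall>i j. \<forall>l2 l12 l13 l23. 0 < l2 \<longrightarrow> 0 < l12 \<longrightarrow> 0 < l13 \<longrightarrow> 0 < l23 \<longrightarrow>
        l2 * brk ?N X X2 i j + l12 * brk ?N X X12 i j + l13 * brk ?N X X13 i j
          + l23 * brk ?N X X23 i j = 0)"
    unfolding metric_family_def by blast
  then show ?thesis
    unfolding equigeodesic_def positive_combination_eq_zero_iff using X_m assms(2) by blast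
qed

lemma brk_with_summands_vanish_iff:
  assumes X: "X = madd (madd X2 X12) (madd X13 X23)"
  shows "(\<forall>i j. brk (1+n2+n3) X X2 i j = 0 \<and> brk (1+n2+n3) X X12 i j = 0 \<and>
           brk (1+n2+n3) X X13 i j = 0 \<and> brk (1+n2+n3) X X23 i j = 0) \<longleftrightarrow>
    (brk (1+n2+n3) X2 X12 = zero_mat \<and> brk (1+n2+n3) X2 X23 = zero_mat \<and>
     mbr n2 n3 X12 X13 = zero_mat \<and> mbr n2 n3 X12 X23 = zero_mat \<and> mbr n2 n3 X13 X23 = zero_mat)"
proof -
  let ?N = "1+n2+n3"
  have N: "2 < ?N" using n3 by simp
  have disjoint: "(I1 \<times> I2 n2 \<union> I2 n2 \<times> I1) \<inter> (I2 n2 \<times> I3 n2 n3 \<union> I3 n2 n3 \<times> I2 n2) = {}"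
    "(I1 \<times> I2 n2 \<union> I2 n2 \<times> I1) \<inter> (I1 \<times> I3 n2 n3 \<union> I3 n2 n3 \<times> I1) = {}"
    by (simp_all add: Int_Un_distrib Int_Un_distrib2 Times_Int_Times index_blocks_disjoint)
  have "brk ?N X12 X13 i j = 0 \<or> brk ?N X13 X23 i j = 0"
    and "brk ?N X2 X12 i j = 0 \<or> brk ?N X12 X23 i j = 0" for i j
    using span_blk_disjoint_entry[OF summand_brackets(5)[unfolded m12_def]
        summand_brackets(3)[unfolded m23_def] disjoint(1)]
      span_blk_disjoint_entry[OF summand_brackets(1)[unfolded m12_def]
        summand_brackets(4)[unfolded m13_def] disjoint(2)]
    by auto
  then have pointwise: "(brk ?N X X2 i j = 0 \<and> brk ?N X X12 i j = 0 \<and> brk ?N X X13 i j = 0 \<and>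
      brk ?N X X23 i j = 0) \<longleftrightarrow> (brk ?N X2 X12 i j = 0 \<and> brk ?N X2 X23 i j = 0 \<and>
      brk ?N X12 X13 i j = 0 \<and> brk ?N X12 X23 i j = 0 \<and> brk ?N X13 X23 i j = 0)" for i j
    unfolding brk_with_summands[OF X] by (smt (verit))
  show ?thesis
    unfolding pointwise mbr_eq_brk[OF N summand_brackets_in_m_sp(3)]
      mbr_eq_brk[OF N summand_brackets_in_m_sp(4)] mbr_eq_brk[OF N summand_brackets_in_m_sp(5)]
    by (auto simp: fun_eq_iff zero_mat_def)
qed

end

theorem mainTheorem6:
  fixes n2 n3 :: nat and X X2 X12 X13 X23 :: mat
  assumes "n2 \<ge> 2" and "n3 \<ge> 2"
    and "X2 \<in> so_n2 n2 n3" and "X12 \<in> m12 n2 n3"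
    and "X13 \<in> m13 n2 n3" and "X23 \<in> m23 n2 n3"
    and "X = madd (madd X2 X12) (madd X13 X23)"
    and "X \<noteq> zero_mat"
  shows "equigeodesic n2 n3 (metric_family n2 n3) X \<longleftrightarrow>
    (brk (1+n2+n3) X2 X12 = zero_mat \<and>
     brk (1+n2+n3) X2 X23 = zero_mat \<and>
     mbr n2 n3 X12 X13 = zero_mat \<and>
     mbr n2 n3 X12 X23 = zero_mat \<and>
     mbr n2 n3 X13 X23 = zero_mat)"
  using equigeodesic_iff_brk_with_summands[OF assms(2-8)]
    brk_with_summands_vanish_iff[OF assms(2-7)]
  by simp

end
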